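(* Let $\mathfrak{g}$ be a filiform Lie algebra of dimension $n$ over a field $K$ of characteristic zero, with adapted basis $\{e_1,\dots,e_n\}$ and $\mathfrak{g}_i=\langle e_i,\dots,e_n\rangle$. Suppose $[\mathfrak{g}_k,\mathfrak{g}_k]=0$ for some $k\ge2$. Then $\chi(\mathfrak{g})\ge n-2(k-1)$.
   Context: A filiform Lie algebra of dimension $n$ is a nilpotent Lie algebra with $\dim\mathfrak{g}^k=n-k$ for $2\le k\le n$ (lower central series $\mathfrak{g}^1=\mathfrak{g}$, $\mathfrak{g}^{k+1}=[\mathfrak{g},\mathfrak{g}^k]$). An adapted basis is a basis $\{e_1,\dots,e_n\}$ with $[e_1,e_i]=e_{i+1}$ ($2\le i\le n-1$), $[e_1,e_n]=0$, $[e_2,e_3]\in\langle e_5,\dots,e_n\rangle$; such bases exist. For $\ell\in\mathfrak{g}^*$, $\mathfrak{g}(\ell)=\{y\in\mathfrak{g}\mid\ell([x,y])=0\ \forall x\in\mathfrak{g}\}$ and $\chi(\mathfrak{g})=\min_{\ell\in\mathfrak{g}^*}\dim\mathfrak{g}(\ell)$. *)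

theory Defs
  imports Main "HOL.Vector_Spaces"
begin

definition lie_algebra ::
  "('k::field \<Rightarrow> 'v::ab_group_add \<Rightarrow> 'v) \<Rightarrow> ('v \<Rightarrow> 'v \<Rightarrow> 'v) \<Rightarrow> bool" where
  "lie_algebra sc br \<longleftrightarrow>
     Vector_Spaces.vector_space sc \<and>
     (\<forall>x y z. br (x + y) z = br x z + br y z) \<and>
     (\<forall>x y z. br x (y + z) = br x y + br x z) \<and>
     (\<forall>a x y. br (sc a x) y = sc a (br x y)) \<and>
     (\<forall>a x y. br x (sc a y) = sc a (br x y)) \<and>
     (\<forall>x. br x x = 0) \<and>
     (\<forall>x y z. br x (br y z) + br y (br z x) + br z (br x y) = 0)"

fun lower_central ::
  "('k::field \<Rightarrow> 'v::ab_group_add \<Rightarrow> 'v) \<Rightarrow> ('v \<Rightarrow> 'v \<Rightarrow> 'v) \<Rightarrow> nat \<Rightarrow> 'v set" where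
  "lower_central sc br 0 = UNIV"
| "lower_central sc br (Suc 0) = UNIV"
| "lower_central sc br (Suc (Suc k)) =
     module.span sc {br x y | x y. y \<in> lower_central sc br (Suc k)}"

definition nilpotent_lie ::
  "('k::field \<Rightarrow> 'v::ab_group_add \<Rightarrow> 'v) \<Rightarrow> ('v \<Rightarrow> 'v \<Rightarrow> 'v) \<Rightarrow> bool" where
  "nilpotent_lie sc br \<longleftrightarrow> (\<exists>m\<ge>1. lower_central sc br m = {0})"

definition filiform ::
  "('k::field \<Rightarrow> 'v::ab_group_add \<Rightarrow> 'v) \<Rightarrow> ('v \<Rightarrow> 'v \<Rightarrow> 'v) \<Rightarrow> nat \<Rightarrow> bool" where
  "filiform sc br n \<longleftrightarrow>
     lie_algebra sc br \<and> vector_space.dim sc (UNIV :: 'v set) = n \<and>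
     nilpotent_lie sc br \<and>
     (\<forall>k. 2 \<le> k \<and> k \<le> n \<longrightarrow> vector_space.dim sc (lower_central sc br k) = n - k)"

definition adapted_basis ::
  "('k::field \<Rightarrow> 'v::ab_group_add \<Rightarrow> 'v) \<Rightarrow> ('v \<Rightarrow> 'v \<Rightarrow> 'v) \<Rightarrow> nat \<Rightarrow> (nat \<Rightarrow> 'v) \<Rightarrow> bool" where
  "adapted_basis sc br n e \<longleftrightarrow>
     inj_on e {1..n} \<and>
     \<not> module.dependent sc (e ` {1..n}) \<and>
     module.span sc (e ` {1..n}) = UNIV \<and>
     (\<forall>i. 2 \<le> i \<and> i \<le> n - 1 \<longrightarrow> br (e 1) (e i) = e (i + 1)) \<and>
     br (e 1) (e n) = 0 \<and>
     br (e 2) (e 3) \<in> module.span sc (e ` {5..n})"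

definition stabilizer ::
  "('v \<Rightarrow> 'v \<Rightarrow> 'v) \<Rightarrow> ('v \<Rightarrow> 'k::zero) \<Rightarrow> 'v set" where
  "stabilizer br l = {y. \<forall>x. l (br x y) = 0}"

definition chi ::
  "('k::field \<Rightarrow> 'v::ab_group_add \<Rightarrow> 'v) \<Rightarrow> ('v \<Rightarrow> 'v \<Rightarrow> 'v) \<Rightarrow> nat" where
  "chi sc br = Min {vector_space.dim sc (stabilizer br l) | l.
                      Vector_Spaces.linear sc ((*) :: 'k \<Rightarrow> 'k \<Rightarrow> 'k) l}"

end

theory Submission
  imports Defs
begin

(* Fix a functional l. The ideal g_k = <e_k, ..., e_n> is abelian of dimension n - k + 1, so for
   y in g_k the values l[e_j, y] with j >= k vanish, and y lies in g(l) as soon as the k - 1 linear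
   conditions l[e_i, y] = 0, i < k, hold. Each condition lowers the dimension by at most one,
   whence dim g(l) >= (n - k + 1) - (k - 1). *)

context finite_dimensional_vector_space
begin

lemma dim_le_dim_inter_kernel:
  assumes S: "subspace S" and f: "Vector_Spaces.linear scale ((*) :: 'a \<Rightarrow> 'a \<Rightarrow> 'a) f"
  shows "dim S \<le> dim (S \<inter> {y. f y = 0}) + 1"
proof (cases "S \<subseteq> {y. f y = 0}")
  case True
  then show ?thesis by (simp add: Int_absorb2)
next
  case False
  then obtain s where s: "s \<in> S" "f s \<noteq> 0" by blast
  interpret f: linear scale "(*)" f by fact
  let ?T = "S \<inter> {y. f y = 0}"
  have "v \<in> span (insert s ?T)" if v: "v \<in> S" for v
  proof -
    define c where "c = f v / f s"
    have "v - c *s s \<in> ?T"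
      using v s S by (simp add: subspace_diff subspace_scale f.diff f.scale c_def)
    then have "(v - c *s s) + c *s s \<in> span (insert s ?T)"
      by (intro span_add) (simp_all add: span_base span_scale)
    then show ?thesis by simp
  qed
  then have "dim S \<le> dim (insert s ?T)" by (intro dim_mono) blast
  also have "\<dots> \<le> dim ?T + 1" by (simp add: dim_insert)
  finally show ?thesis .
qed

lemma dim_le_dim_inter_kernels:
  assumes "finite I" and S: "subspace S"
    and f: "\<And>i. i \<in> I \<Longrightarrow> Vector_Spaces.linear scale ((*) :: 'a \<Rightarrow> 'a \<Rightarrow> 'a) (f i)"
  shows "dim S \<le> dim (S \<inter> {y. \<forall>i\<in>I. f i y = 0}) + card I"
  using \<open>finite I\<close> f
proof (induction I rule: finite_induct)
  case empty
  then show ?case by simp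
next
  case (insert i I)
  let ?T = "S \<inter> {y. \<forall>j\<in>I. f j y = 0}"
  have "subspace ?T"
  proof -
    have "?T = S \<inter> \<Inter> ((\<lambda>j. {y. f j y = 0}) ` I)" by auto
    moreover have "subspace {y. f j y = 0}" if "j \<in> I" for j
    proof -
      interpret linear scale "(*)" "f j" using insert.prems that by simp
      show ?thesis by (rule subspace_kernel)
    qed
    ultimately show ?thesis by (simp add: S subspace_Inter subspace_inter)
  qed
  then have "dim ?T \<le> dim (?T \<inter> {y. f i y = 0}) + 1"
    by (rule dim_le_dim_inter_kernel) (simp add: insert.prems)
  moreover have "?T \<inter> {y. f i y = 0} = S \<inter> {y. \<forall>j\<in>insert i I. f j y = 0}" by auto
  ultimately show ?case using insert by simp
qed

end

lemma
  assumes "lie_algebra sc br" and "Vector_Spaces.linear sc ((*) :: 'k::field \<Rightarrow> 'k \<Rightarrow> 'k) l"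
  shows linear_bracket_left: "Vector_Spaces.linear sc (*) (\<lambda>x. l (br x y))"
    and linear_bracket_right: "Vector_Spaces.linear sc (*) (\<lambda>y. l (br x y))"
  using assms unfolding lie_algebra_def linear_iff by simp_all

lemma mem_stabilizerI:
  assumes lie: "lie_algebra sc br" and l: "Vector_Spaces.linear sc ((*) :: 'k::field \<Rightarrow> 'k \<Rightarrow> 'k) l"
    and B: "module.span sc B = UNIV" and y: "\<And>b. b \<in> B \<Longrightarrow> l (br b y) = 0"
  shows "y \<in> stabilizer br l"
proof -
  interpret linear sc "(*)" "\<lambda>x. l (br x y)" using linear_bracket_left[OF lie l] .
  show ?thesis unfolding stabilizer_def using eq_0_on_span[OF y] B by simp
qed

context finite_dimensional_vector_space
begin

lemma dim_abelian_le_dim_stabilizer: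
  assumes lie: "lie_algebra scale br" and l: "Vector_Spaces.linear scale ((*) :: 'a \<Rightarrow> 'a \<Rightarrow> 'a) l"
    and A: "subspace A" and abelian: "\<And>x y. x \<in> A \<Longrightarrow> y \<in> A \<Longrightarrow> br x y = 0"
    and C: "C \<subseteq> Basis" "Basis - C \<subseteq> A"
  shows "dim A \<le> dim (stabilizer br l) + card C"
proof -
  interpret l: linear scale "(*)" l by fact
  let ?W = "A \<inter> {y. \<forall>c\<in>C. l (br c y) = 0}"
  have "finite C" using C(1) finite_Basis by (rule finite_subset)
  then have "dim A \<le> dim ?W + card C"
    by (intro dim_le_dim_inter_kernels A linear_bracket_right[OF lie l])
  moreover have "?W \<subseteq> stabilizer br l"
  proof
    fix y assume y: "y \<in> ?W"
    have "l (br b y) = 0" if "b \<in> Basis" for b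
    proof (cases "b \<in> C")
      case False
      then have "br b y = 0" using that y C(2) abelian by blast
      then show ?thesis using l.zero by simp
    qed (use y in blast)
    then show "y \<in> stabilizer br l" by (rule mem_stabilizerI[OF lie l span_Basis])
  qed
  then have "dim ?W \<le> dim (stabilizer br l)" by (rule dim_subset)
  ultimately show ?thesis by simp
qed

lemma le_chiI:
  assumes "\<And>l. Vector_Spaces.linear scale ((*) :: 'a \<Rightarrow> 'a \<Rightarrow> 'a) l \<Longrightarrow> m \<le> dim (stabilizer br l)"
  shows "m \<le> chi scale br"
proof -
  let ?D = "{dim (stabilizer br l) | l. Vector_Spaces.linear scale ((*) :: 'a \<Rightarrow> 'a \<Rightarrow> 'a) l}"
  have "finite ?D" by (rule finite_subset[of _ "{..dimension}"]) (auto intro: dim_subset_UNIV)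
  moreover have "Vector_Spaces.linear scale ((*) :: 'a \<Rightarrow> 'a \<Rightarrow> 'a) (\<lambda>_. 0)"
  proof -
    have "vector_space ((*) :: 'a \<Rightarrow> 'a \<Rightarrow> 'a)"
      by unfold_locales (simp_all add: algebra_simps)
    then show ?thesis by (simp add: linear_iff vector_space_axioms)
  qed
  then have "?D \<noteq> {}" by blast
  ultimately have "chi scale br \<in> ?D" unfolding chi_def by (rule Min_in)
  then show ?thesis using assms by auto
qed

end

theorem theorem6p4:
  fixes sc :: "'k::field_char_0 \<Rightarrow> 'v::ab_group_add \<Rightarrow> 'v"
    and br :: "'v \<Rightarrow> 'v \<Rightarrow> 'v"
    and n k :: nat
    and e :: "nat \<Rightarrow> 'v"
  assumes "filiform sc br n"
    and "adapted_basis sc br n e"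
    and "2 \<le> k"
    and "\<forall>x \<in> module.span sc (e ` {k..n}). \<forall>y \<in> module.span sc (e ` {k..n}). br x y = 0"
  shows "int (chi sc br) \<ge> int n - 2 * (int k - 1)"
proof (cases "k \<le> n")
  case False
  then show ?thesis by simp
next
  case True
  have lie: "lie_algebra sc br" using assms(1) by (simp add: filiform_def)
  interpret finite_dimensional_vector_space sc "e ` {1..n}"
    using lie assms(2) by unfold_locales (auto simp: lie_algebra_def adapted_basis_def vector_space_def)
  let ?A = "span (e ` {k..n})"
  have sub: "{k..n} \<subseteq> {1..n}" using assms(3) by auto
  have "inj_on e {k..n}"
    using assms(2) sub by (auto simp: adapted_basis_def intro: inj_on_subset)
  moreover have "independent (e ` {k..n})"
    using independent_mono[OF independent_Basis image_mono[OF sub]] .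
  ultimately have dim_A: "dim ?A = n + 1 - k"
    using True by (simp add: dim_eq_card_independent card_image)
  have outside_A: "e ` {1..n} - e ` {1..<k} \<subseteq> ?A"
    by (clarsimp intro!: span_base) (metis atLeastAtMost_iff atLeastLessThan_iff image_eqI not_le)
  have card_low: "card (e ` {1..<k}) \<le> k - 1"
    using card_image_le[of "{1..<k}" e] by simp
  have "n + 2 - 2 * k \<le> chi sc br"
  proof (rule le_chiI)
    fix l assume "Vector_Spaces.linear sc (*) l"
    then have "dim ?A \<le> dim (stabilizer br l) + card (e ` {1..<k})"
      using assms(4) True outside_A
      by (intro dim_abelian_le_dim_stabilizer[OF lie]) (auto intro: span_base)
    then show "n + 2 - 2 * k \<le> dim (stabilizer br l)"
      using dim_A card_low assms(3) by linarith
  qed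
  then show ?thesis using assms(3) by (simp split: nat_diff_split_asm)
qed

end
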